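(* For all integers $k\ge 2$ and $\ell\ge1$ there exist a finite point set $X\subseteq\mathbb{R}^d$ and a rule $\mathcal{R}$ such that general $k$-means++ with parameters $k,\ell$ and rule $\mathcal{R}$, run on $X$, outputs with constant probability (bounded below by an absolute constant) a set $C$ of centers with $\phi(X,C)\ge \Omega(k^{1-1/\ell})\cdot\mathrm{OPT}_k(X)$.
   Context: For $x\in\mathbb{R}^d$ and finite $C\subseteq\mathbb{R}^d$, $\phi(x,C)=\min_{c\in C}\|x-c\|_2^2$, $\phi(Y,C)=\sum_{x\in Y}\phi(x,C)$; $\mathrm{OPT}_k(X)$ is the minimum of $\phi(X,C)$ over all $C\subseteq\mathbb{R}^d$ with $|C|=k$. A rule $\mathcal{R}$ is any (possibly randomized) procedure that, given $X$, the current center set, $k$, $\ell$ and $\ell$ candidate points $x_1,\dots,x_\ell$, selects one of the candidates. General $k$-means++ with rule $\mathcal{R}$: sample $x_1,\dots,x_\ell\in X$ independently uniformly, let $\mathcal{R}$ select one of them as $c_1$, $C_1=\{c_1\}$; for $i=1,\dots,k-1$ sample $c_{i+1}^1,\dots,c_{i+1}^\ell\in X$ independently, each equal to $x$ with probability $\phi(x,C_i)/\phi(X,C_i)$, let $\mathcal{R}$ select $c_{i+1}$ among them, and set $C_{i+1}=C_i\cup\{c_{i+1}\}$; output $C_k$. *)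

theory Defs
  imports "HOL-Probability.Probability"
begin

type_synonym point = "nat \<Rightarrow> real"

text \<open>R^d is rendered as the functions nat => real vanishing outside {..<d}.\<close>
definition Rd :: "nat \<Rightarrow> point set" where
  "Rd d = {x. \<forall>i\<ge>d. x i = 0}"

definition sqdist :: "nat \<Rightarrow> point \<Rightarrow> point \<Rightarrow> real" where
  "sqdist d x c = (\<Sum>i<d. (x i - c i)^2)"

definition phi_pt :: "nat \<Rightarrow> point \<Rightarrow> point set \<Rightarrow> real" where
  "phi_pt d x C = Min (sqdist d x ` C)"

definition phi :: "nat \<Rightarrow> point set \<Rightarrow> point set \<Rightarrow> real" where
  "phi d Y C = (\<Sum>x\<in>Y. phi_pt d x C)"

definition OPT :: "nat \<Rightarrow> nat \<Rightarrow> point set \<Rightarrow> real" where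
  "OPT d k X = Inf {phi d X C | C. C \<subseteq> Rd d \<and> finite C \<and> card C = k}"

text \<open>D^2-sampling: x is drawn with probability phi(x,C)/phi(X,C).
  (Convention for the degenerate case phi(X,C) = 0: uniform on X.)\<close>
definition d2_pmf :: "nat \<Rightarrow> point set \<Rightarrow> point set \<Rightarrow> point pmf" where
  "d2_pmf d X C = (if phi d X C = 0 then pmf_of_set X
     else embed_pmf (\<lambda>x. if x \<in> X then phi_pt d x C / phi d X C else 0))"

text \<open>A rule: given X, current centers, k, l and the candidate list, it (possibly
  randomly) selects one of the candidates.\<close>
type_synonym rule = "point set \<Rightarrow> point set \<Rightarrow> nat \<Rightarrow> nat \<Rightarrow> point list \<Rightarrow> point pmf"

definition valid_rule :: "rule \<Rightarrow> bool" where
  "valid_rule R \<longleftrightarrow> (\<forall>X C k l xs. xs \<noteq> [] \<longrightarrow> set_pmf (R X C k l xs) \<subseteq> set xs)"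

definition kmpp_step :: "nat \<Rightarrow> rule \<Rightarrow> point set \<Rightarrow> nat \<Rightarrow> nat \<Rightarrow> point set \<Rightarrow> point set pmf" where
  "kmpp_step d R X k l C =
     bind_pmf (replicate_pmf l (d2_pmf d X C)) (\<lambda>xs.
     bind_pmf (R X C k l xs) (\<lambda>c. return_pmf (insert c C)))"

definition kmpp :: "nat \<Rightarrow> rule \<Rightarrow> point set \<Rightarrow> nat \<Rightarrow> nat \<Rightarrow> point set pmf" where
  "kmpp d R X k l =
     bind_pmf (replicate_pmf l (pmf_of_set X)) (\<lambda>xs.
     bind_pmf (R X {} k l xs) (\<lambda>c1.
       ((\<lambda>M. bind_pmf M (kmpp_step d R X k l)) ^^ (k - 1)) (return_pmf {c1})))"

end

(*
  The hard instance has k axis points P_j = D e_j, pairwise at squared distance 2 D^2, and a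
  cluster of N points at squared distance 1 from c = D e_0 + N e_k, each displaced along its
  own extra coordinate. The centers c, P_1, ..., P_(k-1) cost N^2 + N, while every center set
  avoiding the cluster costs at least N (N^2 + 1).

  The rule picks P_0, the axis point closest to the cluster, whenever it is a candidate, and
  otherwise any axis point; a cluster point is chosen only if all l candidates lie in the
  cluster. Once P_0 is a center, the D^2-weight of the cluster is negligible against the
  weight 2 D^2 of each unpicked axis point. Before that, the cluster weighs about as much as
  N axis points: with u axis points unpicked it attracts all l candidates with probability
  about (N / (N + u))^l, and P_0 stays unpicked with probability ((N + u - 1) / (N + u))^l.
  These factors telescope, so each of the k - 1 rounds fails with probability about (N / k)^l,
  and the total stays below 1/2 once (8 N)^l <= k^(l-1), i.e. for N ~ k^(1 - 1/l) / 8.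
  If k^(1 - 1/l) < 8 a single cluster point suffices, since then OPT <= 2 and, by pigeonhole
  among k + 1 points at mutual squared distance >= 1, every set of at most k centers costs
  at least 1/2.
*)

theory Submission
  imports Defs
begin

lemma measure_bind_pmf:
  "measure_pmf.prob (bind_pmf M f) A =
    measure_pmf.expectation M (\<lambda>x. measure_pmf.prob (f x) A)"
  unfolding measure_pmf_bind
  by (rule measure_pmf.measure_bind[where N="count_space UNIV"])
     (auto simp: measure_pmf_in_subprob_space)

lemma measure_bind_pmf_le:
  assumes "\<And>x. x \<in> set_pmf p \<Longrightarrow>
    measure_pmf.prob (f x) E \<le> indicator A x + a * indicator (- B) x + b * indicator B x"
  shows "measure_pmf.prob (bind_pmf p f) E \<le>
    measure_pmf.prob p A + a * (1 - measure_pmf.prob p B) + b * measure_pmf.prob p B"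
proof -
  have integrable_indicator: "integrable (measure_pmf p) (indicator S :: _ \<Rightarrow> real)" for S
    by (rule measure_pmf.integrable_const_bound[where B=1]) (auto simp: indicator_def)
  have "measure_pmf.prob (bind_pmf p f) E \<le>
      measure_pmf.expectation p (\<lambda>x. indicator A x + a * indicator (- B) x + b * indicator B x)"
    unfolding measure_bind_pmf
    by (rule integral_mono_AE[OF measure_pmf.integrable_const_bound[where B=1]])
       (auto intro!: AE_pmfI assms integrable_add integrable_mult_right integrable_indicator)
  also have "\<dots> = measure_pmf.prob p A + a * measure_pmf.prob p (- B) + b * measure_pmf.prob p B"
    using integrable_indicator by simp
  also have "measure_pmf.prob p (- B) = 1 - measure_pmf.prob p B"
    using measure_pmf.prob_compl[of B p] by (simp add: Compl_eq_Diff_UNIV)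
  finally show ?thesis .
qed

lemma measure_replicate_pmf_lists:
  "measure_pmf.prob (replicate_pmf n p) {xs. set xs \<subseteq> A} = measure_pmf.prob p A ^ n"
proof (induction n)
  case (Suc n)
  have "measure_pmf.prob (map_pmf ((#) x) (replicate_pmf n p)) {xs. set xs \<subseteq> A} =
      indicator A x * measure_pmf.prob p A ^ n" for x
  proof -
    have "((#) x) -` {xs. set xs \<subseteq> A} = (if x \<in> A then {xs. set xs \<subseteq> A} else {})"
      by auto
    then show ?thesis using Suc.IH by simp
  qed
  then show ?case by (simp add: map_pmf_def measure_bind_pmf)
qed simp

definition kmpp_rounds :: "nat \<Rightarrow> rule \<Rightarrow> point set \<Rightarrow> nat \<Rightarrow> nat \<Rightarrow>
    nat \<Rightarrow> point set \<Rightarrow> point set pmf" where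
  "kmpp_rounds d R X k l n C = ((\<lambda>M. bind_pmf M (kmpp_step d R X k l)) ^^ n) (return_pmf C)"

lemma kmpp_rounds_0: "kmpp_rounds d R X k l 0 C = return_pmf C"
  by (simp add: kmpp_rounds_def)

lemma kmpp_rounds_Suc:
  "kmpp_rounds d R X k l (Suc n) C = kmpp_step d R X k l C \<bind> kmpp_rounds d R X k l n"
proof (induction n)
  case 0
  show ?case by (simp add: kmpp_rounds_def bind_return_pmf bind_return_pmf')
next
  case (Suc n)
  have unfold: "kmpp_rounds d R X k l (Suc m) C' =
      kmpp_rounds d R X k l m C' \<bind> kmpp_step d R X k l"
    for m C' by (simp add: kmpp_rounds_def)
  show ?case
    unfolding unfold[of "Suc n"] Suc.IH by (simp add: bind_assoc_pmf unfold)
qed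

lemma kmpp_eq_kmpp_rounds:
  "kmpp d R X k l = replicate_pmf l (pmf_of_set X) \<bind>
     (\<lambda>xs. R X {} k l xs \<bind> (\<lambda>c. kmpp_rounds d R X k l (k - 1) {c}))"
  by (simp add: kmpp_def kmpp_rounds_def)

lemma set_pmf_kmpp_rounds:
  "finite C \<Longrightarrow> C' \<in> set_pmf (kmpp_rounds d R X k l n C) \<Longrightarrow>
     C \<subseteq> C' \<and> finite C' \<and> card C' \<le> card C + n"
proof (induction n arbitrary: C)
  case 0
  then show ?case by (simp add: kmpp_rounds_0)
next
  case (Suc n)
  then obtain c where "C' \<in> set_pmf (kmpp_rounds d R X k l n (insert c C))"
    by (auto simp: kmpp_rounds_Suc kmpp_step_def)
  with Suc.IH[of "insert c C"] Suc.prems(1) show ?case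
    by (auto simp: card_insert_if split: if_splits)
qed

lemma set_pmf_kmpp:
  assumes "1 \<le> k" "C \<in> set_pmf (kmpp d R X k l)"
  shows "finite C \<and> C \<noteq> {} \<and> card C \<le> k"
proof -
  from assms(2) obtain c where "C \<in> set_pmf (kmpp_rounds d R X k l (k - 1) {c})"
    by (auto simp: kmpp_eq_kmpp_rounds)
  then have "{c} \<subseteq> C \<and> finite C \<and> card C \<le> card {c} + (k - 1)"
    by (intro set_pmf_kmpp_rounds) auto
  with assms(1) show ?thesis by auto
qed

lemma sqdist_nonneg: "0 \<le> sqdist d x y"
  unfolding sqdist_def by (auto intro: sum_nonneg)

lemma sqdist_self: "sqdist d x x = 0"
  unfolding sqdist_def by simp

lemma sqdist_commute: "sqdist d x y = sqdist d y x"
  unfolding sqdist_def by (simp add: power2_commute)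

lemma sqdist_eq_sum_support:
  assumes "finite S" "S \<subseteq> {..<d}" "\<And>i. i < d \<Longrightarrow> i \<notin> S \<Longrightarrow> x i = y i"
  shows "sqdist d x y = (\<Sum>i\<in>S. (x i - y i)^2)"
  unfolding sqdist_def by (rule sum.mono_neutral_right) (use assms in auto)

lemma sqdist_le_twice_sum: "sqdist d x y \<le> 2 * (sqdist d x c + sqdist d y c)"
proof -
  have "(x i - y i)^2 \<le> 2 * ((x i - c i)^2 + (y i - c i)^2)" for i
    using zero_le_power2[of "x i + y i - 2 * c i"] by (simp add: power2_eq_square algebra_simps)
  then show ?thesis
    unfolding sqdist_def by (simp add: sum_mono sum_distrib_left flip: sum.distrib)
qed

lemma phi_pt_nonneg: "finite C \<Longrightarrow> C \<noteq> {} \<Longrightarrow> 0 \<le> phi_pt d x C"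
  unfolding phi_pt_def by (auto simp: sqdist_nonneg)

lemma phi_pt_le_sqdist: "finite C \<Longrightarrow> c \<in> C \<Longrightarrow> phi_pt d x C \<le> sqdist d x c"
  unfolding phi_pt_def by (auto intro: Min_le)

lemma phi_pt_attained: "finite C \<Longrightarrow> C \<noteq> {} \<Longrightarrow> \<exists>c\<in>C. phi_pt d x C = sqdist d x c"
  unfolding phi_pt_def using Min_in[of "sqdist d x ` C"] by fastforce

lemma phi_nonneg: "finite C \<Longrightarrow> C \<noteq> {} \<Longrightarrow> 0 \<le> phi d Y C"
  unfolding phi_def by (auto intro!: sum_nonneg phi_pt_nonneg)

lemma pmf_d2_pmf:
  assumes "finite X" "finite C" "C \<noteq> {}" "phi d X C \<noteq> 0"
  shows "pmf (d2_pmf d X C) x = (if x \<in> X then phi_pt d x C / phi d X C else 0)"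
proof -
  let ?f = "\<lambda>x. if x \<in> X then phi_pt d x C / phi d X C else 0"
  have pos: "0 < phi d X C" using phi_nonneg[OF assms(2,3), of d X] assms(4) by linarith
  have nonneg: "\<And>x. 0 \<le> ?f x" using pos phi_pt_nonneg[OF assms(2,3)] by auto
  have "(\<integral>\<^sup>+x. ennreal (?f x) \<partial>count_space UNIV) = (\<Sum>x\<in>X. ennreal (?f x))"
    using assms(1) by (intro nn_integral_count_space') auto
  also have "\<dots> = ennreal (\<Sum>x\<in>X. ?f x)"
    using nonneg by (rule sum_ennreal)
  also have "(\<Sum>x\<in>X. ?f x) = 1"
    using pos by (simp add: phi_def flip: sum_divide_distrib)
  finally have "(\<integral>\<^sup>+x. ennreal (?f x) \<partial>count_space UNIV) = 1" by simp
  then show ?thesis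
    unfolding d2_pmf_def using assms(4) pmf_embed_pmf[of ?f, OF nonneg] by simp
qed

lemma measure_d2_pmf:
  assumes "finite X" "finite C" "C \<noteq> {}" "phi d X C \<noteq> 0" "A \<subseteq> X"
  shows "measure_pmf.prob (d2_pmf d X C) A = (\<Sum>x\<in>A. phi_pt d x C) / phi d X C"
proof -
  have "finite A" using assms(1,5) by (rule finite_subset[rotated])
  then have "measure_pmf.prob (d2_pmf d X C) A = (\<Sum>x\<in>A. pmf (d2_pmf d X C) x)"
    by (rule measure_measure_pmf_finite)
  also have "\<dots> = (\<Sum>x\<in>A. phi_pt d x C / phi d X C)"
    using assms by (intro sum.cong) (auto simp: pmf_d2_pmf)
  finally show ?thesis by (simp add: sum_divide_distrib)
qed

lemma half_separation_le_phi:
  assumes "finite X" "Y \<subseteq> X" "finite C" "C \<noteq> {}" "card C < card Y"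
    and sep: "\<And>x y. x \<in> Y \<Longrightarrow> y \<in> Y \<Longrightarrow> x \<noteq> y \<Longrightarrow> \<delta> \<le> sqdist d x y"
  shows "\<delta> / 2 \<le> phi d X C"
proof -
  obtain nearest where nearest: "\<And>y. nearest y \<in> C \<and> phi_pt d y C = sqdist d y (nearest y)"
    using phi_pt_attained[OF assms(3,4)] by metis
  have "\<not> inj_on nearest Y"
  proof
    assume "inj_on nearest Y"
    then have "card Y \<le> card C"
      using nearest assms(3) by (intro card_inj_on_le) auto
    with assms(5) show False by simp
  qed
  then obtain y1 y2 where y: "y1 \<in> Y" "y2 \<in> Y" "y1 \<noteq> y2" "nearest y1 = nearest y2"
    unfolding inj_on_def by blast
  have "\<delta> \<le> sqdist d y1 y2" using sep y by blast
  also have "\<dots> \<le> 2 * (phi_pt d y1 C + phi_pt d y2 C)"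
    using sqdist_le_twice_sum[of d y1 y2 "nearest y1"] nearest[of y1] nearest[of y2] y(4) by simp
  also have "phi_pt d y1 C + phi_pt d y2 C = (\<Sum>x\<in>{y1, y2}. phi_pt d x C)"
    using y(3) by simp
  also have "\<dots> \<le> phi d X C"
    unfolding phi_def using assms(1,2) y(1,2) phi_pt_nonneg[OF assms(3,4)]
    by (intro sum_mono2) auto
  finally show ?thesis by simp
qed

lemma powr_one_minus_inverse_power:
  assumes "0 < x" "1 \<le> l"
  shows "(x powr (1 - 1 / real l)) ^ l = x ^ (l - 1)"
proof -
  have "(x powr (1 - 1 / real l)) ^ l = x powr ((1 - 1 / real l) * real l)"
    using assms(1) by (simp add: powr_powr flip: powr_realpow)
  also have "(1 - 1 / real l) * real l = real (l - 1)"
    using assms(2) by (simp add: field_simps of_nat_diff)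
  finally show ?thesis
    using assms(1) by (simp add: powr_realpow)
qed

lemma OPT_le_phi:
  assumes "finite C" "card C = k" "C \<subseteq> Rd d" "1 \<le> k"
  shows "OPT d k X \<le> phi d X C"
  unfolding OPT_def
proof (rule cInf_lower)
  show "phi d X C \<in> {phi d X C | C. C \<subseteq> Rd d \<and> finite C \<and> card C = k}"
    using assms by blast
  show "bdd_below {phi d X C | C. C \<subseteq> Rd d \<and> finite C \<and> card C = k}"
    using assms(4) by (intro bdd_belowI[of _ 0]) (auto intro!: phi_nonneg)
qed

lemma OPT_greatest:
  assumes "finite C" "card C = k" "C \<subseteq> Rd d"
    and "\<And>C. finite C \<Longrightarrow> card C = k \<Longrightarrow> C \<subseteq> Rd d \<Longrightarrow> b \<le> phi d X C"
  shows "b \<le> OPT d k X"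
  unfolding OPT_def using assms by (intro cInf_greatest) auto

locale hard_instance =
  fixes k N l :: nat
  assumes two_le_k: "2 \<le> k" and one_le_N: "1 \<le> N" and one_le_l: "1 \<le> l"
begin

(* Chosen so that rho <= 1 / (8 k), see rho_le. *)
definition D :: real where
  "D = 4 * real k * (real N + 1) ^ 3"

definition dim :: nat where
  "dim = k + 1 + N"

definition axis_pt :: "nat \<Rightarrow> point" where
  "axis_pt j = (\<lambda>i. if i = j then D else 0)"

definition cluster_center :: point where
  "cluster_center = (\<lambda>i. if i = 0 then D else if i = k then real N else 0)"

definition cluster_pt :: "nat \<Rightarrow> point" where
  "cluster_pt m = (\<lambda>i. if i = k + 1 + m then 1 else cluster_center i)"

abbreviation axis_pts :: "point set" where
  "axis_pts \<equiv> axis_pt ` {..<k}"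

abbreviation cluster :: "point set" where
  "cluster \<equiv> cluster_pt ` {..<N}"

abbreviation pts :: "point set" where
  "pts \<equiv> axis_pts \<union> cluster"

lemma one_le_D: "1 \<le> D"
proof -
  have "1 * 1 \<le> (4 * real k) * (real N + 1) ^ 3"
    using two_le_k by (intro mult_mono) (auto simp: one_le_power)
  then show ?thesis by (simp add: D_def)
qed

lemma inj_axis_pt: "inj axis_pt"
proof (rule injI)
  fix i j assume "axis_pt i = axis_pt j"
  then have "axis_pt i i = axis_pt j i" by simp
  then show "i = j" using one_le_D by (auto simp: axis_pt_def split: if_splits)
qed

lemma inj_cluster_pt: "inj cluster_pt"
proof (rule injI)
  fix m m' assume "cluster_pt m = cluster_pt m'"
  then have "cluster_pt m (k + 1 + m) = cluster_pt m' (k + 1 + m)" by simp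
  then show "m = m'" by (auto simp: cluster_pt_def cluster_center_def split: if_splits)
qed

lemma axis_pt_notin_cluster: "j < k \<Longrightarrow> axis_pt j \<notin> cluster"
proof
  assume "j < k" "axis_pt j \<in> cluster"
  then obtain m where "axis_pt j k = cluster_pt m k" by auto
  with \<open>j < k\<close> one_le_N show False
    by (simp add: axis_pt_def cluster_pt_def cluster_center_def)
qed

lemma cluster_center_notin_axis: "cluster_center \<notin> range axis_pt"
proof
  assume "cluster_center \<in> range axis_pt"
  then obtain j where "cluster_center = axis_pt j" by auto
  then have "cluster_center 0 = axis_pt j 0" "cluster_center k = axis_pt j k" by simp_all
  with two_le_k one_le_N one_le_D show False
    by (simp add: axis_pt_def cluster_center_def split: if_splits)
qed

lemma card_cluster: "card cluster = N"
  by (simp add: card_image inj_on_subset[OF inj_cluster_pt])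

lemma card_pts: "card pts = k + N"
  using axis_pt_notin_cluster
  by (subst card_Un_disjoint) (auto simp: card_cluster card_image inj_on_subset[OF inj_axis_pt])

lemma sum_pts: "(\<Sum>x\<in>pts. f x) = (\<Sum>j<k. f (axis_pt j)) + (\<Sum>m<N. f (cluster_pt m))"
  using axis_pt_notin_cluster
  by (subst sum.union_disjoint)
     (auto simp: sum.reindex inj_on_subset[OF inj_axis_pt] inj_on_subset[OF inj_cluster_pt])

lemma pts_subset_Rd: "pts \<subseteq> Rd dim"
  by (auto simp: Rd_def dim_def axis_pt_def cluster_pt_def cluster_center_def)

lemma sqdist_axis_axis:
  "i < k \<Longrightarrow> j < k \<Longrightarrow> sqdist dim (axis_pt i) (axis_pt j) = (if i = j then 0 else 2 * D^2)"
  by (subst sqdist_eq_sum_support[where S="{i, j}"]) (auto simp: dim_def axis_pt_def)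

lemma sqdist_cluster_axis:
  assumes "m < N" "j < k"
  shows "sqdist dim (cluster_pt m) (axis_pt j) = real N ^ 2 + 1 + (if j = 0 then 0 else 2 * D^2)"
  using assms two_le_k
  by (subst sqdist_eq_sum_support[where S="{0, j, k, k + 1 + m}"])
     (auto simp: dim_def axis_pt_def cluster_pt_def cluster_center_def)

lemma sqdist_cluster_center: "m < N \<Longrightarrow> sqdist dim (cluster_pt m) cluster_center = 1"
  using two_le_k
  by (subst sqdist_eq_sum_support[where S="{k + 1 + m}"])
     (auto simp: dim_def cluster_pt_def cluster_center_def)

lemma sqdist_axis0_center: "sqdist dim (axis_pt 0) cluster_center = real N ^ 2"
  using two_le_k
  by (subst sqdist_eq_sum_support[where S="{k}"]) (auto simp: dim_def axis_pt_def cluster_center_def)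

definition rho :: real where
  "rho = real N * (real N ^ 2 + 1) / (2 * D^2)"

(* The cost of the cluster under the centers axis_pt ` J, in units of 2 D^2, the cost of an
   axis point that is not a center. *)
definition cluster_cost :: "nat set \<Rightarrow> real" where
  "cluster_cost J = (if 0 \<in> J then rho else real N + rho)"

lemma rho_pos: "0 < rho"
  unfolding rho_def using one_le_N one_le_D
  by (intro divide_pos_pos mult_pos_pos) (auto intro: add_nonneg_pos)

lemma cluster_cost_pos: "0 < cluster_cost J"
  using rho_pos by (simp add: cluster_cost_def)

lemma phi_pt_axis_pt:
  assumes "J \<subseteq> {..<k}" "J \<noteq> {}" "i < k"
  shows "phi_pt dim (axis_pt i) (axis_pt ` J) = (if i \<in> J then 0 else 2 * D^2)"
  unfolding phi_pt_def
proof (rule Min_eqI)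
  show "finite (sqdist dim (axis_pt i) ` axis_pt ` J)"
    using assms(1) finite_subset by blast
  show "y \<ge> (if i \<in> J then 0 else 2 * D^2)" if "y \<in> sqdist dim (axis_pt i) ` axis_pt ` J" for y
    using that assms by (auto simp: sqdist_axis_axis sqdist_nonneg subset_iff)
  show "(if i \<in> J then 0 else 2 * D^2) \<in> sqdist dim (axis_pt i) ` axis_pt ` J"
    using assms by (auto simp: sqdist_axis_axis image_iff subset_iff)
qed

lemma phi_pt_cluster_pt:
  assumes "J \<subseteq> {..<k}" "J \<noteq> {}" "m < N"
  shows "phi_pt dim (cluster_pt m) (axis_pt ` J) = real N ^ 2 + 1 + (if 0 \<in> J then 0 else 2 * D^2)"
  unfolding phi_pt_def
proof (rule Min_eqI)
  show "finite (sqdist dim (cluster_pt m) ` axis_pt ` J)"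
    using assms(1) finite_subset by blast
  show "y \<ge> real N ^ 2 + 1 + (if 0 \<in> J then 0 else 2 * D^2)"
    if "y \<in> sqdist dim (cluster_pt m) ` axis_pt ` J" for y
    using that assms by (auto simp: sqdist_cluster_axis subset_iff)
  show "real N ^ 2 + 1 + (if 0 \<in> J then 0 else 2 * D^2) \<in> sqdist dim (cluster_pt m) ` axis_pt ` J"
  proof (cases "0 \<in> J")
    case False
    with assms(2) obtain j where "j \<in> J" "j \<noteq> 0" by auto
    with False assms have "sqdist dim (cluster_pt m) (axis_pt j) = real N ^ 2 + 1 + 2 * D^2"
      by (auto simp: sqdist_cluster_axis)
    with False \<open>j \<in> J\<close> show ?thesis by force
  qed (use assms in \<open>force simp: sqdist_cluster_axis\<close>)
qed

lemma sum_phi_pt_cluster: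
  assumes "J \<subseteq> {..<k}" "J \<noteq> {}"
  shows "(\<Sum>x\<in>cluster. phi_pt dim x (axis_pt ` J)) = 2 * D^2 * cluster_cost J"
proof -
  have "(\<Sum>x\<in>cluster. phi_pt dim x (axis_pt ` J)) =
      real N * (real N ^ 2 + 1 + (if 0 \<in> J then 0 else 2 * D^2))"
    using assms by (simp add: sum.reindex inj_on_subset[OF inj_cluster_pt] phi_pt_cluster_pt)
  then show ?thesis
    using one_le_D by (simp add: cluster_cost_def rho_def field_simps)
qed

lemma phi_axis_centers:
  assumes "J \<subseteq> {..<k}" "J \<noteq> {}"
  shows "phi dim pts (axis_pt ` J) = 2 * D^2 * (real (k - card J) + cluster_cost J)"
proof -
  have "(\<Sum>j<k. phi_pt dim (axis_pt j) (axis_pt ` J)) = (\<Sum>j\<in>{..<k} - J. 2 * D^2)"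
    using assms by (intro sum.mono_neutral_cong_right) (auto simp: phi_pt_axis_pt)
  also have "\<dots> = 2 * D^2 * real (k - card J)"
    using assms(1) by (simp add: card_Diff_subset finite_subset)
  finally show ?thesis
    using sum_phi_pt_cluster[OF assms] sum_pts[of "\<lambda>x. phi_pt dim x (axis_pt ` J)"]
    by (simp add: phi_def sum.reindex inj_on_subset[OF inj_cluster_pt] algebra_simps)
qed

lemma phi_axis_centers_pos: "J \<subseteq> {..<k} \<Longrightarrow> J \<noteq> {} \<Longrightarrow> 0 < phi dim pts (axis_pt ` J)"
  using one_le_D cluster_cost_pos[of J] by (simp add: phi_axis_centers add_nonneg_pos)

lemma set_pmf_d2_axis_centers:
  assumes "J \<subseteq> {..<k}" "J \<noteq> {}"
  shows "set_pmf (d2_pmf dim pts (axis_pt ` J)) \<subseteq> cluster \<union> axis_pt ` ({..<k} - J)"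
proof
  fix x assume "x \<in> set_pmf (d2_pmf dim pts (axis_pt ` J))"
  moreover have "finite J" using assms(1) finite_subset by blast
  ultimately have "x \<in> pts" "phi_pt dim x (axis_pt ` J) \<noteq> 0"
    using assms phi_axis_centers_pos[OF assms]
    by (auto simp: set_pmf_eq pmf_d2_pmf split: if_splits)
  then show "x \<in> cluster \<union> axis_pt ` ({..<k} - J)"
    using phi_pt_axis_pt[OF assms] by (auto split: if_splits)
qed

lemma measure_d2_cluster:
  assumes "J \<subseteq> {..<k}" "J \<noteq> {}"
  shows "measure_pmf.prob (d2_pmf dim pts (axis_pt ` J)) cluster =
    cluster_cost J / (real (k - card J) + cluster_cost J)"
proof -
  have "finite J" using assms(1) finite_subset by blast
  then have "measure_pmf.prob (d2_pmf dim pts (axis_pt ` J)) cluster =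
      (\<Sum>x\<in>cluster. phi_pt dim x (axis_pt ` J)) / phi dim pts (axis_pt ` J)"
    using assms phi_axis_centers_pos[OF assms] by (intro measure_d2_pmf) auto
  then show ?thesis
    using assms one_le_D by (simp add: sum_phi_pt_cluster phi_axis_centers)
qed

lemma measure_d2_not_axis0:
  assumes "J \<subseteq> {..<k}" "J \<noteq> {}"
  shows "measure_pmf.prob (d2_pmf dim pts (axis_pt ` J)) (- {axis_pt 0}) =
    (if 0 \<in> J then 1 else 1 - 1 / (real (k - card J) + cluster_cost J))"
proof -
  have "finite J" using assms(1) finite_subset by blast
  have "measure_pmf.prob (d2_pmf dim pts (axis_pt ` J)) (- {axis_pt 0}) =
      1 - pmf (d2_pmf dim pts (axis_pt ` J)) (axis_pt 0)"
    using measure_pmf.prob_compl[of "{axis_pt 0}"]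
    by (simp add: Compl_eq_Diff_UNIV measure_pmf_single)
  also have "pmf (d2_pmf dim pts (axis_pt ` J)) (axis_pt 0) =
      phi_pt dim (axis_pt 0) (axis_pt ` J) / phi dim pts (axis_pt ` J)"
    using \<open>finite J\<close> assms phi_axis_centers_pos[OF assms] two_le_k by (simp add: pmf_d2_pmf)
  finally show ?thesis
    using assms two_le_k one_le_D by (simp add: phi_pt_axis_pt phi_axis_centers)
qed

definition greedy_choice :: "point list \<Rightarrow> point" where
  "greedy_choice xs =
    (if axis_pt 0 \<in> set xs then axis_pt 0 else hd (filter (\<lambda>x. x \<notin> cluster) xs @ xs))"

definition greedy_rule :: rule where
  "greedy_rule = (\<lambda>_ _ _ _ xs. return_pmf (greedy_choice xs))"

lemma greedy_choice_in_set: "xs \<noteq> [] \<Longrightarrow> greedy_choice xs \<in> set xs"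
  unfolding greedy_choice_def
  using hd_in_set[of "filter (\<lambda>x. x \<notin> cluster) xs @ xs"] by auto

lemma valid_greedy_rule: "valid_rule greedy_rule"
  by (auto simp: valid_rule_def greedy_rule_def greedy_choice_in_set)

lemma greedy_choice_axis:
  assumes "set xs \<subseteq> cluster \<union> axis_pt ` ({..<k} - J)" "\<not> set xs \<subseteq> cluster"
  obtains i where "i < k" "i \<notin> J" "greedy_choice xs = axis_pt i"
    "i = 0 \<longleftrightarrow> axis_pt 0 \<in> set xs"
proof (cases "axis_pt 0 \<in> set xs")
  case True
  then have "0 \<notin> J"
    using assms(1) axis_pt_notin_cluster[of 0] two_le_k inj_axis_pt by (auto dest: injD)
  with True two_le_k that[of 0] show ?thesis by (simp add: greedy_choice_def)
next
  case False
  let ?ys = "filter (\<lambda>x. x \<notin> cluster) xs"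
  have "?ys \<noteq> []" using assms(2) by (auto simp: filter_empty_conv)
  then have "hd ?ys \<in> set xs - cluster" using hd_in_set[of ?ys] by auto
  then obtain i where "i < k" "i \<notin> J" "hd ?ys = axis_pt i"
    using assms(1) by auto
  with False \<open>?ys \<noteq> []\<close> \<open>hd ?ys \<in> set xs - cluster\<close> that[of i] show ?thesis
    by (auto simp: greedy_choice_def)
qed

abbreviation rounds :: "nat \<Rightarrow> point set \<Rightarrow> point set pmf" where
  "rounds \<equiv> kmpp_rounds dim greedy_rule pts k l"

lemma rounds_Suc:
  "rounds (Suc n) C =
    replicate_pmf l (d2_pmf dim pts C) \<bind> (\<lambda>xs. rounds n (insert (greedy_choice xs) C))"
  by (simp add: kmpp_rounds_Suc kmpp_step_def greedy_rule_def bind_assoc_pmf bind_return_pmf)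

lemma kmpp_greedy_rule:
  "kmpp dim greedy_rule pts k l =
    replicate_pmf l (pmf_of_set pts) \<bind>
      (\<lambda>xs. rounds (k - 1) (insert (greedy_choice xs) (axis_pt ` {})))"
  by (simp add: kmpp_eq_kmpp_rounds greedy_rule_def bind_return_pmf)

definition axis_only :: "point set set" where
  "axis_only = {C. C \<noteq> {} \<and> C \<subseteq> axis_pts}"

(* Bounds the probability of leaving axis_only during n more rounds; the flag records whether
   axis_pt 0 is already a center. *)
definition failure_bound :: "nat \<Rightarrow> bool \<Rightarrow> real" where
  "failure_bound n b = real n * rho +
     (if b then 0 else real n * ((real N + rho) / (real N + rho + real n)) ^ l)"

lemma failure_bound_nonneg: "0 \<le> failure_bound n b"
  using less_imp_le[OF rho_pos] by (simp add: failure_bound_def)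

lemma failure_bound_mono: "failure_bound n True \<le> failure_bound n False"
  using less_imp_le[OF rho_pos] by (simp add: failure_bound_def)

lemma measure_not_axis_only_step:
  assumes J: "J \<subseteq> {..<k}" "card J + Suc n = k"
    and supp: "set_pmf p \<subseteq> cluster \<union> axis_pt ` ({..<k} - J)"
    and bound: "\<And>J'. J' \<subseteq> {..<k} \<Longrightarrow> J' \<noteq> {} \<Longrightarrow> card J' + n = k \<Longrightarrow>
      measure_pmf.prob (rounds n (axis_pt ` J')) (- axis_only) \<le> failure_bound n (0 \<in> J')"
  shows "measure_pmf.prob
      (replicate_pmf l p \<bind> (\<lambda>xs. rounds n (insert (greedy_choice xs) (axis_pt ` J)))) (- axis_only)
    \<le> measure_pmf.prob p cluster ^ l
      + failure_bound n True * (1 - measure_pmf.prob p (- {axis_pt 0}) ^ l)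
      + failure_bound n (0 \<in> J) * measure_pmf.prob p (- {axis_pt 0}) ^ l"
proof -
  let ?in_cluster = "{xs. set xs \<subseteq> cluster}" and ?no_axis0 = "{xs. set xs \<subseteq> - {axis_pt 0}}"
  have "measure_pmf.prob (rounds n (insert (greedy_choice xs) (axis_pt ` J))) (- axis_only)
      \<le> indicator ?in_cluster xs + failure_bound n True * indicator (- ?no_axis0) xs
        + failure_bound n (0 \<in> J) * indicator ?no_axis0 xs"
    if "xs \<in> set_pmf (replicate_pmf l p)" for xs
  proof (cases "set xs \<subseteq> cluster")
    case True
    have "1 \<le> indicator ?in_cluster xs + failure_bound n True * indicator (- ?no_axis0) xs
        + failure_bound n (0 \<in> J) * indicator ?no_axis0 xs"
      using True failure_bound_nonneg[of n True] failure_bound_nonneg[of n "0 \<in> J"]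
      by (auto simp: indicator_def)
    then show ?thesis by (rule order_trans[OF measure_pmf.prob_le_1])
  next
    case False
    have "set xs \<subseteq> cluster \<union> axis_pt ` ({..<k} - J)"
      using that supp by (auto simp: set_replicate_pmf)
    then obtain i where i: "i < k" "i \<notin> J" "greedy_choice xs = axis_pt i"
      "i = 0 \<longleftrightarrow> axis_pt 0 \<in> set xs"
      using False by (rule greedy_choice_axis)
    have "finite J" using J(1) finite_subset by blast
    then have "measure_pmf.prob (rounds n (axis_pt ` insert i J)) (- axis_only)
        \<le> failure_bound n (0 \<in> insert i J)"
      using i J by (intro bound) auto
    with i False show ?thesis by (auto simp: indicator_def)
  qed
  from measure_bind_pmf_le[of "replicate_pmf l p", OF this] show ?thesis
    by (simp only: measure_replicate_pmf_lists)
qed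

lemma measure_rounds_not_axis_only:
  "J \<subseteq> {..<k} \<Longrightarrow> J \<noteq> {} \<Longrightarrow> card J + n = k \<Longrightarrow>
    measure_pmf.prob (rounds n (axis_pt ` J)) (- axis_only) \<le> failure_bound n (0 \<in> J)"
proof (induction n arbitrary: J)
  case 0
  then have "axis_pt ` J \<in> axis_only" by (auto simp: axis_only_def)
  then show ?case by (simp add: kmpp_rounds_0 failure_bound_def)
next
  case (Suc n)
  let ?p = "d2_pmf dim pts (axis_pt ` J)"
  define c where "c = cluster_cost J"
  have u: "real (k - card J) = real n + 1" using Suc.prems(3) by simp
  have c_pos: "0 < c" unfolding c_def by (rule cluster_cost_pos)
  have step: "measure_pmf.prob (rounds (Suc n) (axis_pt ` J)) (- axis_only) \<le>
      measure_pmf.prob ?p cluster ^ l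
      + failure_bound n True * (1 - measure_pmf.prob ?p (- {axis_pt 0}) ^ l)
      + failure_bound n (0 \<in> J) * measure_pmf.prob ?p (- {axis_pt 0}) ^ l"
    unfolding rounds_Suc using Suc.prems Suc.IH
    by (intro measure_not_axis_only_step set_pmf_d2_axis_centers) auto
  have p_cluster: "measure_pmf.prob ?p cluster = c / (real n + 1 + c)"
    using measure_d2_cluster[OF Suc.prems(1,2)] u by (simp add: c_def)
  have p_not0: "measure_pmf.prob ?p (- {axis_pt 0}) = (if 0 \<in> J then 1 else 1 - 1 / (real n + 1 + c))"
    using measure_d2_not_axis0[OF Suc.prems(1,2)] u by (simp add: c_def)
  show ?case
  proof (cases "0 \<in> J")
    case True
    then have "c = rho" by (simp add: c_def cluster_cost_def)
    have "(c / (real n + 1 + c)) ^ l \<le> c / (real n + 1 + c)"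
      using power_decreasing[of 1 l "c / (real n + 1 + c)"] one_le_l c_pos by simp
    also have "\<dots> \<le> c"
      using c_pos by (simp add: divide_le_eq)
    finally show ?thesis
      using step True \<open>c = rho\<close> by (simp add: p_cluster p_not0 failure_bound_def algebra_simps)
  next
    case False
    then have c: "c = real N + rho" by (simp add: c_def cluster_cost_def)
    have r: "1 - 1 / (real n + 1 + c) = (c + real n) / (c + real (Suc n))"
      using c_pos by (simp add: field_simps)
    \<comment> \<open>the probabilities of not yet having picked axis_pt 0 telescope\<close>
    have "(c / (c + real n)) ^ l * ((c + real n) / (c + real (Suc n))) ^ l =
        (c / (c + real (Suc n))) ^ l"
      using c_pos by (simp flip: power_mult_distrib)
    then show ?thesis
      using step False rho_pos unfolding p_cluster p_not0 r
      by (simp add: failure_bound_def c algebra_simps)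
  qed
qed

lemma measure_kmpp_not_axis_only:
  "measure_pmf.prob (kmpp dim greedy_rule pts k l) (- axis_only)
    \<le> (real N / (real N + real k)) ^ l + failure_bound (k - 1) False"
proof -
  let ?p = "pmf_of_set pts"
  let ?r = "measure_pmf.prob ?p (- {axis_pt 0}) ^ l"
  have pts_ne: "pts \<noteq> {}" using two_le_k by (simp add: lessThan_empty_iff)
  have "measure_pmf.prob ?p cluster = real N / (real N + real k)"
    using pts_ne card_pts card_cluster by (simp add: measure_pmf_of_set Int_absorb1 add.commute)
  moreover have "measure_pmf.prob (kmpp dim greedy_rule pts k l) (- axis_only) \<le>
      measure_pmf.prob ?p cluster ^ l + failure_bound (k - 1) True * (1 - ?r)
      + failure_bound (k - 1) (0 \<in> ({} :: nat set)) * ?r"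
    unfolding kmpp_greedy_rule
    using pts_ne two_le_k measure_rounds_not_axis_only
    by (intro measure_not_axis_only_step) auto
  moreover have "failure_bound (k - 1) True * (1 - ?r) \<le> failure_bound (k - 1) False * (1 - ?r)"
    using failure_bound_mono by (intro mult_right_mono) (simp_all add: power_le_one)
  ultimately show ?thesis by (simp add: algebra_simps)
qed

lemma rho_le: "rho \<le> 1 / (8 * real k)"
proof -
  have "(real N + 1) ^ 3 = real N * (real N ^ 2 + 1) + (3 * real N ^ 2 + 2 * real N + 1)"
    by (simp add: power3_eq_cube power2_eq_square algebra_simps)
  then have "real N * (real N ^ 2 + 1) \<le> (real N + 1) ^ 3"
    by (simp add: add_nonneg_nonneg)
  then have "8 * real k * (real N * (real N ^ 2 + 1)) \<le> 2 * D"
    unfolding D_def using mult_left_mono[of _ _ "8 * real k"] by simp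
  also have "\<dots> \<le> 2 * D^2"
    using one_le_D by (simp add: power2_eq_square)
  finally have "8 * real k * (real N * (real N ^ 2 + 1)) \<le> 2 * D^2" .
  then show ?thesis
    using two_le_k one_le_D unfolding rho_def by (simp add: divide_le_eq le_divide_eq mult.commute)
qed

lemma eight_N_le_k:
  assumes "(8 * real N) ^ l \<le> real k ^ (l - 1)"
  shows "8 * real N \<le> real k"
proof -
  have "real k ^ (l - 1) \<le> real k ^ l" using two_le_k by (intro power_increasing) simp_all
  with assms have "(8 * real N) ^ Suc (l - 1) \<le> real k ^ Suc (l - 1)"
    using one_le_l by simp
  then show ?thesis by (rule power_le_imp_le_base) simp
qed

lemma failure_bound_cluster_term_le:
  assumes pow: "(8 * real N) ^ l \<le> real k ^ (l - 1)"
  shows "real (k - 1) * ((real N + rho) / (real N + rho + real (k - 1))) ^ l \<le> 1 / 4"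
proof -
  have k: "2 \<le> real k" and N: "1 \<le> real N" using two_le_k one_le_N by simp_all
  have two_le_l: "2 \<le> l"
  proof (rule ccontr)
    assume "\<not> 2 \<le> l"
    then have "l = 1" using one_le_l by simp
    with pow N show False by simp
  qed
  define a where "a = real N + rho"
  have a_pos: "0 < a" using N rho_pos by (simp add: a_def)
  have "1 / (8 * real k) \<le> 1" using k by simp
  with rho_le N have "rho \<le> real N" by linarith
  then have "a * real k \<le> 2 * real N * real k"
    using k by (simp add: a_def)
  also have "\<dots> \<le> 4 * real N * (real k - 1)"
    using k N by (simp add: algebra_simps)
  also have "\<dots> \<le> 4 * real N * (a + real (k - 1))"
    using k N a_pos by (simp add: of_nat_diff)
  finally have "a / (a + real (k - 1)) \<le> 4 * real N / real k"
    using k a_pos by (simp add: divide_le_eq le_divide_eq)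
  then have "real (k - 1) * (a / (a + real (k - 1))) ^ l \<le> real k * (4 * real N / real k) ^ l"
    using a_pos by (intro mult_mono power_mono) simp_all
  also have "\<dots> = (8 * real N) ^ l / (2 ^ l * real k ^ (l - 1))"
  proof -
    obtain m where l: "l = Suc m" using one_le_l by (cases l) auto
    have "real k * (4 * real N / real k) ^ l = (4 * real N) ^ l / real k ^ m"
      using k unfolding l power_divide power_Suc by simp
    also have "(4 * real N) ^ l = (2 * (4 * real N)) ^ l / 2 ^ l"
      by (simp only: power_mult_distrib) simp
    also have "2 * (4 * real N) = 8 * real N" by simp
    finally show ?thesis by (simp add: l)
  qed
  also have "\<dots> \<le> real k ^ (l - 1) / (2 ^ l * real k ^ (l - 1))"
    using pow by (intro divide_right_mono) simp_all
  also have "\<dots> = 1 / 2 ^ l" using k by simp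
  also have "\<dots> \<le> 1 / 2 ^ 2"
    using two_le_l by (intro divide_left_mono power_increasing) simp_all
  finally show ?thesis by (simp add: a_def)
qed

lemma failure_probability_le_half:
  assumes "(8 * real N) ^ l \<le> real k ^ (l - 1)"
  shows "(real N / (real N + real k)) ^ l + failure_bound (k - 1) False \<le> 1 / 2"
proof -
  have k: "2 \<le> real k" and N: "1 \<le> real N" using two_le_k one_le_N by simp_all
  have "(real N / (real N + real k)) ^ l \<le> real N / (real N + real k)"
    using power_decreasing[of 1 l "real N / (real N + real k)"] one_le_l k
    by (simp add: divide_le_eq_1)
  also have "\<dots> \<le> 1 / 8"
    using eight_N_le_k[OF assms] N by (simp add: divide_le_eq)
  finally have first_round: "(real N / (real N + real k)) ^ l \<le> 1 / 8" .
  have "real (k - 1) * rho \<le> real k * (1 / (8 * real k))"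
    using rho_le less_imp_le[OF rho_pos] by (intro mult_mono) simp_all
  then have "real (k - 1) * rho \<le> 1 / 8" using k by simp
  with first_round failure_bound_cluster_term_le[OF assms] show ?thesis
    by (simp add: failure_bound_def)
qed

lemma measure_kmpp_axis_only:
  assumes "(8 * real N) ^ l \<le> real k ^ (l - 1)"
  shows "1 / 2 \<le> measure_pmf.prob (kmpp dim greedy_rule pts k l) axis_only"
  using measure_kmpp_not_axis_only failure_probability_le_half[OF assms]
    measure_pmf.prob_compl[of axis_only "kmpp dim greedy_rule pts k l"]
  by (simp add: Compl_eq_Diff_UNIV)

lemma phi_axis_only:
  assumes "C \<in> axis_only"
  shows "real N * (real N ^ 2 + 1) \<le> phi dim pts C"
proof -
  have C: "C \<noteq> {}" "C \<subseteq> axis_pts" and "finite C"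
    using assms finite_subset by (auto simp: axis_only_def)
  have "real N ^ 2 + 1 \<le> phi_pt dim (cluster_pt m) C" if "m < N" for m
  proof -
    obtain c where "c \<in> C" "phi_pt dim (cluster_pt m) C = sqdist dim (cluster_pt m) c"
      using phi_pt_attained[OF \<open>finite C\<close> C(1)] by blast
    with C(2) that show ?thesis by (auto simp: sqdist_cluster_axis)
  qed
  then have "(\<Sum>m<N. real N ^ 2 + 1) \<le> (\<Sum>m<N. phi_pt dim (cluster_pt m) C)"
    by (intro sum_mono) simp
  also have "\<dots> \<le> phi dim pts C"
    unfolding phi_def sum_pts using phi_pt_nonneg[OF \<open>finite C\<close> C(1)]
    by (simp add: sum_nonneg)
  finally show ?thesis by simp
qed

definition opt_centers :: "point set" where
  "opt_centers = insert cluster_center (axis_pt ` {1..<k})"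

lemma opt_centers: "finite opt_centers" "card opt_centers = k" "opt_centers \<subseteq> Rd dim"
proof -
  show "finite opt_centers" by (simp add: opt_centers_def)
  have "cluster_center \<notin> axis_pt ` {1..<k}" using cluster_center_notin_axis by blast
  then show "card opt_centers = k"
    using two_le_k by (simp add: opt_centers_def card_image inj_on_subset[OF inj_axis_pt])
  show "opt_centers \<subseteq> Rd dim"
    by (auto simp: opt_centers_def Rd_def dim_def axis_pt_def cluster_center_def)
qed

lemma phi_opt_centers: "phi dim pts opt_centers \<le> real N ^ 2 + real N"
proof -
  have axis: "phi_pt dim (axis_pt j) opt_centers \<le> (if j = 0 then real N ^ 2 else 0)" if "j < k" for j
  proof (cases "j = 0")
    case True
    have "phi_pt dim (axis_pt 0) opt_centers \<le> sqdist dim (axis_pt 0) cluster_center"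
      using opt_centers(1) by (rule phi_pt_le_sqdist) (simp add: opt_centers_def)
    with True show ?thesis by (simp add: sqdist_axis0_center)
  next
    case False
    have "phi_pt dim (axis_pt j) opt_centers \<le> sqdist dim (axis_pt j) (axis_pt j)"
      using opt_centers(1) by (rule phi_pt_le_sqdist) (use False that in \<open>auto simp: opt_centers_def\<close>)
    with False show ?thesis by (simp add: sqdist_self)
  qed
  have cluster: "phi_pt dim (cluster_pt m) opt_centers \<le> 1" if "m < N" for m
  proof -
    have "phi_pt dim (cluster_pt m) opt_centers \<le> sqdist dim (cluster_pt m) cluster_center"
      using opt_centers(1) by (rule phi_pt_le_sqdist) (simp add: opt_centers_def)
    with that show ?thesis by (simp add: sqdist_cluster_center)
  qed
  have "phi dim pts opt_centers \<le> (\<Sum>j<k. if j = 0 then real N ^ 2 else 0) + (\<Sum>m<N. 1)"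
    unfolding phi_def sum_pts using axis cluster by (intro add_mono sum_mono) auto
  also have "(\<Sum>j<k. if j = 0 then real N ^ 2 else 0) = real N ^ 2"
    using two_le_k by simp
  finally show ?thesis by simp
qed

lemma phi_ge_half:
  assumes "finite C" "C \<noteq> {}" "card C \<le> k"
  shows "1 / 2 \<le> phi dim pts C"
proof (rule half_separation_le_phi)
  let ?Y = "insert (cluster_pt 0) axis_pts"
  have "cluster_pt 0 \<notin> axis_pts"
  proof
    assume "cluster_pt 0 \<in> axis_pts"
    then obtain j where "j < k" "axis_pt j = cluster_pt 0" by auto
    with axis_pt_notin_cluster[of j] one_le_N show False by auto
  qed
  then show "card C < card ?Y"
    using assms(3) by (simp add: card_image inj_on_subset[OF inj_axis_pt])
  show "?Y \<subseteq> pts" using one_le_N by auto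
  have "1 \<le> D^2" using one_le_D by (simp add: one_le_power)
  then show "1 \<le> sqdist dim x y" if "x \<in> ?Y" "y \<in> ?Y" "x \<noteq> y" for x y
    using that one_le_N
    by (auto simp: sqdist_axis_axis sqdist_cluster_axis sqdist_commute[of dim _ "cluster_pt 0"])
qed (use assms in auto)

lemma OPT_bounds: "1 / 2 \<le> OPT dim k pts" "OPT dim k pts \<le> real N ^ 2 + real N"
proof -
  show "1 / 2 \<le> OPT dim k pts"
    using opt_centers
  proof (rule OPT_greatest)
    fix C :: "point set" assume "finite C" "card C = k"
    with two_le_k show "1 / 2 \<le> phi dim pts C" by (intro phi_ge_half) auto
  qed
  have "OPT dim k pts \<le> phi dim pts opt_centers"
    using opt_centers two_le_k by (intro OPT_le_phi) auto
  with phi_opt_centers show "OPT dim k pts \<le> real N ^ 2 + real N" by linarith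
qed

lemma measure_kmpp_ratio_ge_half:
  assumes "(8 * real N) ^ l \<le> real k ^ (l - 1)" "r \<le> 8 * (real N + 1)"
  shows "1 / 2 \<le> measure_pmf.prob (kmpp dim greedy_rule pts k l)
    {C. 1 / 32 * r * OPT dim k pts \<le> phi dim pts C}"
proof -
  have "4 * (real N ^ 2 + 1) - (real N + 1) ^ 2 = 2 * real N ^ 2 + (real N - 1) ^ 2 + 2"
    by (simp add: power2_eq_square algebra_simps)
  then have square: "(real N + 1) ^ 2 \<le> 4 * (real N ^ 2 + 1)"
    using zero_le_power2[of "real N"] zero_le_power2[of "real N - 1"] by linarith
  have "r * OPT dim k pts \<le> 8 * (real N + 1) * OPT dim k pts"
    using assms(2) OPT_bounds(1) by (intro mult_right_mono) auto
  also have "\<dots> \<le> 8 * (real N + 1) * (real N ^ 2 + real N)"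
    using OPT_bounds(2) by (intro mult_left_mono) auto
  also have "\<dots> = 8 * real N * (real N + 1) ^ 2"
    by (simp add: power2_eq_square algebra_simps)
  also have "\<dots> \<le> 8 * real N * (4 * (real N ^ 2 + 1))"
    using square by (intro mult_left_mono) auto
  also have "\<dots> = 32 * (real N * (real N ^ 2 + 1))"
    by simp
  finally have "1 / 32 * r * OPT dim k pts \<le> real N * (real N ^ 2 + 1)"
    by simp
  then have "axis_only \<subseteq> {C. 1 / 32 * r * OPT dim k pts \<le> phi dim pts C}"
    using phi_axis_only order_trans by blast
  then have "measure_pmf.prob (kmpp dim greedy_rule pts k l) axis_only \<le>
      measure_pmf.prob (kmpp dim greedy_rule pts k l) {C. 1 / 32 * r * OPT dim k pts \<le> phi dim pts C}"
    by (rule measure_pmf.finite_measure_mono) simp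
  with measure_kmpp_axis_only[OF assms(1)] show ?thesis by linarith
qed

lemma measure_kmpp_ratio_eq_1:
  assumes "N = 1" "r \<le> 8"
  shows "measure_pmf.prob (kmpp dim greedy_rule pts k l)
    {C. 1 / 32 * r * OPT dim k pts \<le> phi dim pts C} = 1"
proof (rule measure_pmf.prob_eq_1[THEN iffD2])
  have "r * OPT dim k pts \<le> 8 * OPT dim k pts"
    using assms(2) OPT_bounds(1) by (intro mult_right_mono) auto
  then have bound: "1 / 32 * r * OPT dim k pts \<le> 1 / 2"
    using assms(1) OPT_bounds(2) by simp
  show "AE C in measure_pmf (kmpp dim greedy_rule pts k l).
      C \<in> {C. 1 / 32 * r * OPT dim k pts \<le> phi dim pts C}"
  proof (rule AE_pmfI)
    fix C assume "C \<in> set_pmf (kmpp dim greedy_rule pts k l)"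
    with two_le_k have "finite C" "C \<noteq> {}" "card C \<le> k"
      using set_pmf_kmpp[of k] by auto
    with bound phi_ge_half show "C \<in> {C. 1 / 32 * r * OPT dim k pts \<le> phi dim pts C}"
      by fastforce
  qed
qed simp

lemma lower_bound_witness:
  assumes "1 / 2 \<le> measure_pmf.prob (kmpp dim greedy_rule pts k l)
    {C. c * OPT dim k pts \<le> phi dim pts C}"
  shows "\<exists>d X R. finite X \<and> X \<noteq> {} \<and> X \<subseteq> Rd d \<and> OPT d k X > 0 \<and> valid_rule R \<and>
    measure_pmf.prob (kmpp d R X k l) {C. phi d X C \<ge> c * OPT d k X} \<ge> 1 / 2"
proof (intro exI conjI)
  show "finite pts" by simp
  show "pts \<noteq> {}" using two_le_k by (simp add: lessThan_empty_iff)
  show "pts \<subseteq> Rd dim" by (rule pts_subset_Rd)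
  show "0 < OPT dim k pts" using OPT_bounds(1) by linarith
  show "valid_rule greedy_rule" by (rule valid_greedy_rule)
  show "1 / 2 \<le> measure_pmf.prob (kmpp dim greedy_rule pts k l)
    {C. c * OPT dim k pts \<le> phi dim pts C}" by (rule assms)
qed

end

lemma kmpp_lower_bound_instance:
  assumes k: "2 \<le> k" and l: "1 \<le> l"
  shows "\<exists>d X R. finite X \<and> X \<noteq> {} \<and> X \<subseteq> Rd d \<and> OPT d k X > 0 \<and> valid_rule R \<and>
    measure_pmf.prob (kmpp d R X k l)
      {C. phi d X C \<ge> 1 / 32 * real k powr (1 - 1 / real l) * OPT d k X} \<ge> 1 / 2"
proof -
  define r where "r = real k powr (1 - 1 / real l)"
  show ?thesis
  proof (cases "8 \<le> r")
    case True
    define N where "N = nat \<lfloor>r / 8\<rfloor>"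
    have N: "1 \<le> N" "8 * real N \<le> r" "r \<le> 8 * (real N + 1)"
      using True by (simp_all add: N_def le_nat_floor) linarith+
    interpret hard_instance k N l using k l N(1) by unfold_locales
    have "(8 * real N) ^ l \<le> r ^ l" using N(2) by (intro power_mono) simp_all
    also have "r ^ l = real k ^ (l - 1)"
      unfolding r_def using k l by (intro powr_one_minus_inverse_power) simp_all
    finally have "(8 * real N) ^ l \<le> real k ^ (l - 1)" .
    from lower_bound_witness[OF measure_kmpp_ratio_ge_half[OF this N(3)]] show ?thesis
      unfolding r_def .
  next
    case False
    interpret hard_instance k 1 l using k l by unfold_locales simp_all
    from measure_kmpp_ratio_eq_1[of r] False
    have "1 / 2 \<le> measure_pmf.prob (kmpp dim greedy_rule pts k l)
        {C. 1 / 32 * r * OPT dim k pts \<le> phi dim pts C}" by simp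
    from lower_bound_witness[OF this] show ?thesis
      unfolding r_def .
  qed
qed

theorem theoremA1:
  "\<exists>p0 > 0. \<exists>c > 0. \<forall>k l :: nat. k \<ge> 2 \<longrightarrow> l \<ge> 1 \<longrightarrow>
     (\<exists>d X R. finite X \<and> X \<noteq> {} \<and> X \<subseteq> Rd d \<and> OPT d k X > 0 \<and> valid_rule R \<and>
        measure_pmf.prob (kmpp d R X k l)
          {C. phi d X C \<ge> c * real k powr (1 - 1 / real l) * OPT d k X} \<ge> p0)"
  by (rule exI[of _ "1 / 2"], intro conjI exI[of _ "1 / 32"] allI impI kmpp_lower_bound_instance)
     simp_all

end
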